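(* Let $G=(V,E)$ be a $k$-cozy graph with edge connectivity $\kappa'(G)=2\ell$, and let $D\subset E$ with $|D|=2\ell$ be a set of edges whose removal disconnects $G$ into two components $G_1$ and $G_2$. Let $V_1,V_2$ be multisets of vertices, both taken from the vertex set of the same component (either $G_1$ or $G_2$), with $|V_1|=|V_2|=q\le\ell$. Then there are $q$ edge-disjoint paths in $G$ connecting $V_1$ and $V_2$ with multiplicities preserved, such that every vertex of $V_1$ and of $V_2$ is the endpoint of some such path.
   Context: An undirected graph $G$ is $k$-cozy if it is connected, $k$-regular, and equipped with a $1$-factorization, i.e., an assignment of colors from $\{1,\dots,k\}$ to its edges such that the $k$ edges incident at each vertex receive distinct colors. The edge connectivity $\kappa'(G)$ is the minimum number of edges whose removal disconnects $G$. "Multiplicities preserved" means a vertex appearing $m$ times in $V_1$ (resp. $V_2$) is the endpoint of $m$ of the paths. *)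

theory Defs
  imports Main "HOL-Library.Multiset"
begin

definition simple_graph :: "'a set \<Rightarrow> 'a set set \<Rightarrow> bool" where
  "simple_graph V E \<longleftrightarrow> finite V \<and> (\<forall>e\<in>E. \<exists>u v. u \<noteq> v \<and> u \<in> V \<and> v \<in> V \<and> e = {u, v})"

definition incident_edges :: "'a set set \<Rightarrow> 'a \<Rightarrow> 'a set set" where
  "incident_edges E v = {e \<in> E. v \<in> e}"

definition regular :: "'a set \<Rightarrow> 'a set set \<Rightarrow> nat \<Rightarrow> bool" where
  "regular V E k \<longleftrightarrow> (\<forall>v\<in>V. card (incident_edges E v) = k)"

definition one_factorization :: "'a set \<Rightarrow> 'a set set \<Rightarrow> nat \<Rightarrow> ('a set \<Rightarrow> nat) \<Rightarrow> bool" where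
  "one_factorization V E k col \<longleftrightarrow>
     (\<forall>e\<in>E. col e \<in> {1..k}) \<and> (\<forall>v\<in>V. inj_on col (incident_edges E v))"

definition walk :: "'a set \<Rightarrow> 'a set set \<Rightarrow> 'a list \<Rightarrow> bool" where
  "walk V E xs \<longleftrightarrow> xs \<noteq> [] \<and> set xs \<subseteq> V \<and>
     (\<forall>i. Suc i < length xs \<longrightarrow> {xs ! i, xs ! Suc i} \<in> E)"

definition path :: "'a set \<Rightarrow> 'a set set \<Rightarrow> 'a list \<Rightarrow> bool" where
  "path V E xs \<longleftrightarrow> walk V E xs \<and> distinct xs"

definition path_edges :: "'a list \<Rightarrow> 'a set set" where
  "path_edges xs = {{xs ! i, xs ! Suc i} | i. Suc i < length xs}"

definition reachable :: "'a set \<Rightarrow> 'a set set \<Rightarrow> 'a \<Rightarrow> 'a \<Rightarrow> bool" where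
  "reachable V E u v \<longleftrightarrow> (\<exists>xs. path V E xs \<and> hd xs = u \<and> last xs = v)"

definition connected_graph :: "'a set \<Rightarrow> 'a set set \<Rightarrow> bool" where
  "connected_graph V E \<longleftrightarrow> V \<noteq> {} \<and> (\<forall>u\<in>V. \<forall>v\<in>V. reachable V E u v)"

definition components :: "'a set \<Rightarrow> 'a set set \<Rightarrow> 'a set set" where
  "components V E = {{v \<in> V. reachable V E u v} | u. u \<in> V}"

definition cozy :: "'a set \<Rightarrow> 'a set set \<Rightarrow> nat \<Rightarrow> ('a set \<Rightarrow> nat) \<Rightarrow> bool" where
  "cozy V E k col \<longleftrightarrow> simple_graph V E \<and> connected_graph V E \<and> regular V E k
     \<and> one_factorization V E k col"

definition disconnecting :: "'a set \<Rightarrow> 'a set set \<Rightarrow> 'a set set \<Rightarrow> bool" where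
  "disconnecting V E F \<longleftrightarrow> F \<subseteq> E \<and> \<not> connected_graph V (E - F)"

definition edge_connectivity :: "'a set \<Rightarrow> 'a set set \<Rightarrow> nat" where
  "edge_connectivity V E = (LEAST n. \<exists>F. disconnecting V E F \<and> card F = n)"

end

(*
  The statement is an instance of the edge version of Menger's theorem for multisets of
  terminals: edge-disjoint walks linking A to B exist as soon as, for every vertex set X,
  the sources in X can leave X, i.e. #(A in X) <= #(B in X) + #(edges leaving X).
  Every proper nonempty X is cut off by its leaving edges, so there are at least
  edge_connectivity = 2l >= q of them, and the cut condition holds for V1 and V2.

  Menger's theorem is proved by induction on |V| + |E| + |A|. A terminal common to A and
  B is linked by a one-vertex path. If some proper X is tight, the problem splits into
  G[X], where the tails of the leaving edges become extra targets, and G[V - X], where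
  their heads become extra sources; the two linkages are glued along the cut edges.
  Otherwise the condition is strict, so any edge can be deleted, and without edges
  strictness forces a common terminal. Finally each walk is shortened to a path.
*)

theory Submission
  imports Defs
begin

lemma path_edges_Nil [simp]: "path_edges [] = {}"
  and path_edges_singleton [simp]: "path_edges [x] = {}"
  by (simp_all add: path_edges_def)

lemma path_edges_Cons_Cons [simp]:
  "path_edges (x # y # xs) = insert {x, y} (path_edges (y # xs))"
proof -
  have "path_edges zs = (\<lambda>i. {zs ! i, zs ! Suc i}) ` {i. Suc i < length zs}" for zs :: "'a list"
    by (auto simp: path_edges_def)
  moreover have "{i. Suc i < length (x # y # xs)} = insert 0 (Suc ` {i. Suc i < length (y # xs)})"
    by (auto simp: image_iff less_Suc_eq_0_disj)
  ultimately show ?thesis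
    by (simp add: image_image)
qed

lemma path_edges_Cons_subset: "path_edges xs \<subseteq> path_edges (x # xs)"
  by (cases xs) auto

lemma path_edges_append:
  "p \<noteq> [] \<Longrightarrow> q \<noteq> [] \<Longrightarrow> path_edges (p @ q) = path_edges p \<union> path_edges q \<union> {{last p, hd q}}"
  by (induction p rule: induct_list012) (auto simp: neq_Nil_conv)

lemma path_edges_append_suffix: "path_edges q \<subseteq> path_edges (p @ q)"
  by (induction p) (use path_edges_Cons_subset in fastforce)+

lemma path_edges_nonempty: "e \<in> path_edges p \<Longrightarrow> e \<noteq> {}"
  by (auto simp: path_edges_def)

lemma walk_iff_path_edges: "walk V E xs \<longleftrightarrow> xs \<noteq> [] \<and> set xs \<subseteq> V \<and> path_edges xs \<subseteq> E"
  unfolding walk_def path_edges_def by blast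

lemma walk_append:
  "walk V E p \<Longrightarrow> walk V E q \<Longrightarrow> {last p, hd q} \<in> E \<Longrightarrow> walk V E (p @ q)"
  by (auto simp: walk_iff_path_edges path_edges_append)

lemma walk_mono: "walk V' E' p \<Longrightarrow> V' \<subseteq> V \<Longrightarrow> E' \<subseteq> E \<Longrightarrow> walk V E p"
  by (auto simp: walk_iff_path_edges)

lemma walk_shortcut:
  assumes "walk V E xs"
  shows "\<exists>ys. path V E ys \<and> path_edges ys \<subseteq> path_edges xs \<and> hd ys = hd xs \<and> last ys = last xs"
  using assms
proof (induction xs)
  case (Cons x xs)
  show ?case
  proof (cases "xs = []")
    case True
    then show ?thesis using Cons.prems by (intro exI[of _ "[x]"]) (simp add: path_def)
  next
    case False
    then have "walk V E xs" and x: "x \<in> V" "{x, hd xs} \<in> E"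
      using Cons.prems by (auto simp: walk_iff_path_edges neq_Nil_conv)
    then obtain ys where ys: "path V E ys" "path_edges ys \<subseteq> path_edges xs"
        "hd ys = hd xs" "last ys = last xs"
      using Cons.IH by blast
    have edges_xs: "path_edges xs \<subseteq> path_edges (x # xs)"
      by (rule path_edges_Cons_subset)
    show ?thesis
    proof (cases "x \<in> set ys")
      case False
      have "path_edges (x # ys) = insert {x, hd xs} (path_edges ys)"
        using ys(1,3) by (cases ys) (auto simp: path_def walk_def)
      moreover have "path_edges (x # xs) = insert {x, hd xs} (path_edges xs)"
        using \<open>xs \<noteq> []\<close> by (cases xs) auto
      ultimately show ?thesis
        using ys False x \<open>xs \<noteq> []\<close>
        by (intro exI[of _ "x # ys"]) (auto simp: path_def walk_iff_path_edges)
    next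
      case True
      then obtain a b where ab: "ys = a @ x # b" by (meson split_list)
      have "path V E (x # b)"
        using ys(1) unfolding ab path_def walk_iff_path_edges
        using path_edges_append_suffix[of "x # b" a] by auto
      moreover have "path_edges (x # b) \<subseteq> path_edges ys"
        unfolding ab by (rule path_edges_append_suffix)
      moreover have "last (x # b) = last (x # xs)"
        using ys(4) \<open>xs \<noteq> []\<close> by (simp add: ab)
      ultimately show ?thesis
        using ys(2) edges_xs by (intro exI[of _ "x # b"]) auto
    qed
  qed
qed (simp add: walk_def)

definition count_in :: "'a multiset \<Rightarrow> 'a set \<Rightarrow> nat" where
  "count_in A X = size {#v \<in># A. v \<in> X#}"

definition cut_arcs :: "'a set set \<Rightarrow> 'a set \<Rightarrow> ('a \<times> 'a) set" where
  "cut_arcs E X = {(u, v). {u, v} \<in> E \<and> u \<in> X \<and> v \<notin> X}"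

definition induced_edges :: "'a set set \<Rightarrow> 'a set \<Rightarrow> 'a set set" where
  "induced_edges E X = {e \<in> E. e \<subseteq> X}"

definition targets_inside :: "'a set set \<Rightarrow> 'a set \<Rightarrow> 'a multiset \<Rightarrow> 'a multiset" where
  "targets_inside E X B = {#v \<in># B. v \<in> X#} + image_mset fst (mset_set (cut_arcs E X))"

definition sources_outside :: "'a set \<Rightarrow> 'a set set \<Rightarrow> 'a set \<Rightarrow> 'a multiset \<Rightarrow> 'a multiset" where
  "sources_outside V E X A = {#v \<in># A. v \<in> V - X#} + image_mset snd (mset_set (cut_arcs E X))"

definition cut_condition :: "'a set \<Rightarrow> 'a set set \<Rightarrow> 'a multiset \<Rightarrow> 'a multiset \<Rightarrow> bool" where
  "cut_condition V E A B \<longleftrightarrow> (\<forall>X \<subseteq> V. count_in A X \<le> count_in B X + card (cut_arcs E X))"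

definition edge_load :: "'a list multiset \<Rightarrow> 'a set \<Rightarrow> nat" where
  "edge_load Ps e = size {#p \<in># Ps. e \<in> path_edges p#}"

definition edge_disjoint_linkage ::
    "'a set \<Rightarrow> 'a set set \<Rightarrow> 'a multiset \<Rightarrow> 'a multiset \<Rightarrow> 'a list multiset \<Rightarrow> bool" where
  "edge_disjoint_linkage V E A B Ps \<longleftrightarrow> (\<forall>p \<in># Ps. walk V E p) \<and> (\<forall>e. edge_load Ps e \<le> 1)
     \<and> image_mset hd Ps = A \<and> image_mset last Ps = B"

lemma simple_graph_edge_subset: "simple_graph V E \<Longrightarrow> e \<in> E \<Longrightarrow> e \<subseteq> V"
  unfolding simple_graph_def by fastforce

lemma simple_graph_induced:
  assumes "simple_graph V E" "X \<subseteq> V"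
  shows "simple_graph X (induced_edges E X)"
  unfolding simple_graph_def
proof (intro conjI ballI)
  show "finite X"
    using assms by (auto simp: simple_graph_def intro: finite_subset)
  fix e assume "e \<in> induced_edges E X"
  then obtain u v where "u \<noteq> v" "e = {u, v}" "e \<subseteq> X"
    using assms(1) by (auto simp: induced_edges_def simple_graph_def)
  then show "\<exists>u v. u \<noteq> v \<and> u \<in> X \<and> v \<in> X \<and> e = {u, v}"
    by blast
qed

lemma finite_edges:
  assumes "simple_graph V E"
  shows "finite E"
proof (rule finite_subset)
  show "E \<subseteq> Pow V"
    using simple_graph_edge_subset[OF assms] by blast
  show "finite (Pow V)"
    using assms by (simp add: simple_graph_def)
qed

lemma cut_arcs_subset:
  assumes "simple_graph V E"
  shows "cut_arcs E X \<subseteq> V \<times> V"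
proof
  fix f assume "f \<in> cut_arcs E X"
  then have "{fst f, snd f} \<in> E"
    by (auto simp: cut_arcs_def)
  then show "f \<in> V \<times> V"
    using simple_graph_edge_subset[OF assms] by (cases f) auto
qed

lemma finite_cut_arcs:
  assumes "simple_graph V E"
  shows "finite (cut_arcs E X)"
proof (rule finite_subset[OF cut_arcs_subset[OF assms]])
  show "finite (V \<times> V)"
    using assms by (simp add: simple_graph_def)
qed

lemma card_cut_arcs_of_edge: "card {f \<in> cut_arcs E X. {fst f, snd f} = e} \<le> 1"
proof (cases "{f \<in> cut_arcs E X. {fst f, snd f} = e} = {}")
  case True
  show ?thesis unfolding True by simp
next
  case False
  then obtain f0 where f0: "f0 \<in> cut_arcs E X" "{fst f0, snd f0} = e" by blast
  have "{f \<in> cut_arcs E X. {fst f, snd f} = e} \<subseteq> {f0}"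
  proof
    fix f assume "f \<in> {f \<in> cut_arcs E X. {fst f, snd f} = e}"
    then have "{fst f, snd f} = {fst f0, snd f0}" "fst f \<in> X" "snd f \<notin> X" "fst f0 \<in> X" "snd f0 \<notin> X"
      using f0 by (auto simp: cut_arcs_def)
    then show "f \<in> {f0}"
      by (auto simp: doubleton_eq_iff prod_eq_iff)
  qed
  then show ?thesis
    using card_mono[of "{f0}"] by fastforce
qed

lemma count_in_union [simp]: "count_in (A + B) X = count_in A X + count_in B X"
  by (simp add: count_in_def)

lemma count_in_add_mset [simp]:
  "count_in (add_mset v A) X = (if v \<in> X then Suc (count_in A X) else count_in A X)"
  by (simp add: count_in_def)

lemma count_in_empty [simp]: "count_in A {} = 0"
  by (simp add: count_in_def)

lemma count_in_le_size: "count_in A X \<le> size A"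
  by (simp add: count_in_def)

lemma count_in_carrier: "set_mset A \<subseteq> V \<Longrightarrow> count_in A V = size A"
  unfolding count_in_def by (metis filter_mset_True filter_mset_cong subset_iff)

lemma filter_mset_split_carrier:
  "set_mset A \<subseteq> V \<Longrightarrow> {#v \<in># A. v \<in> X#} + {#v \<in># A. v \<in> V - X#} = A"
  by (rule multiset_eqI) (auto simp: not_in_iff[symmetric])

lemma count_in_compl: "set_mset A \<subseteq> V \<Longrightarrow> count_in A X + count_in A (V - X) = size A"
  unfolding count_in_def by (metis filter_mset_split_carrier size_union)

lemma count_in_Un_disjoint:
  assumes "Z \<inter> X = {}"
  shows "count_in A (Z \<union> X) = count_in A Z + count_in A X"
proof -
  have "{#v \<in># A. v \<in> Z \<union> X#} = {#v \<in># A. v \<in> Z#} + {#v \<in># A. v \<in> X#}"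
    using assms by (intro multiset_eqI) (simp add: disjoint_iff)
  then show ?thesis
    by (simp add: count_in_def)
qed

lemma count_in_filter: "Z \<subseteq> X \<Longrightarrow> count_in {#v \<in># A. v \<in> X#} Z = count_in A Z"
  unfolding count_in_def filter_filter_mset by (auto intro!: arg_cong[where f=size] filter_mset_cong)

lemma count_in_image_mset_set:
  "finite F \<Longrightarrow> count_in (image_mset g (mset_set F)) Z = card {f \<in> F. g f \<in> Z}"
  by (simp add: count_in_def filter_mset_image_mset)

lemma count_in_pos_imp_mem: "0 < count_in A X \<Longrightarrow> \<exists>a. a \<in># A \<and> a \<in> X"
  unfolding count_in_def by (metis filter_mset_eq_mempty_iff gr_implies_not0 size_empty)

lemma card_le_card_Un: "finite B \<Longrightarrow> finite C \<Longrightarrow> A \<subseteq> B \<union> C \<Longrightarrow> card A \<le> card B + card C"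
  by (metis card_Un_le card_mono finite_UnI le_trans)

lemma cut_conditionI:
  assumes "set_mset A \<subseteq> V" "set_mset B \<subseteq> V" "size A = size B"
    and "\<And>X. X \<subseteq> V \<Longrightarrow> X \<noteq> {} \<Longrightarrow> X \<noteq> V \<Longrightarrow> count_in A X \<le> count_in B X + card (cut_arcs E X)"
  shows "cut_condition V E A B"
  unfolding cut_condition_def
proof (intro allI impI)
  fix X assume "X \<subseteq> V"
  then consider "X = {}" | "X = V" | "X \<noteq> {}" "X \<noteq> V" by blast
  then show "count_in A X \<le> count_in B X + card (cut_arcs E X)"
  proof cases
    case 2
    then show ?thesis
      using assms(1-3) by (simp add: count_in_carrier)
  qed (use assms(4) \<open>X \<subseteq> V\<close> in auto)
qed

lemma cut_condition_remove_common:
  assumes "cut_condition V E (add_mset v A) (add_mset v B)"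
  shows "cut_condition V E A B"
  unfolding cut_condition_def
proof (intro allI impI)
  fix X assume "X \<subseteq> V"
  then have "count_in (add_mset v A) X \<le> count_in (add_mset v B) X + card (cut_arcs E X)"
    using assms by (simp add: cut_condition_def)
  then show "count_in A X \<le> count_in B X + card (cut_arcs E X)"
    by (simp split: if_splits)
qed

lemma cut_condition_delete_edge:
  assumes "set_mset A \<subseteq> V" "set_mset B \<subseteq> V" "size A = size B"
    and strict: "\<And>X. X \<subseteq> V \<Longrightarrow> X \<noteq> {} \<Longrightarrow> X \<noteq> V \<Longrightarrow>
      count_in A X < count_in B X + card (cut_arcs E X)"
    and "simple_graph V E"
  shows "cut_condition V (E - {e}) A B"
proof (rule cut_conditionI[OF assms(1-3)])
  fix X assume X: "X \<subseteq> V" "X \<noteq> {}" "X \<noteq> V"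
  have fin: "finite (cut_arcs E X)"
    using finite_cut_arcs[OF \<open>simple_graph V E\<close>] .
  have "cut_arcs E X \<subseteq> cut_arcs (E - {e}) X \<union> {f \<in> cut_arcs E X. {fst f, snd f} = e}"
    by (auto simp: cut_arcs_def)
  then have "card (cut_arcs E X) \<le> card (cut_arcs (E - {e}) X) + card {f \<in> cut_arcs E X. {fst f, snd f} = e}"
    using fin by (intro card_le_card_Un) (auto simp: cut_arcs_def intro: finite_subset[OF _ fin])
  then show "count_in A X \<le> count_in B X + card (cut_arcs (E - {e}) X)"
    using strict[OF X] card_cut_arcs_of_edge[of E X e] by linarith
qed

lemma common_vertex_if_no_edges:
  assumes "set_mset A \<subseteq> V" "set_mset B \<subseteq> V" "size A = size B" "A \<noteq> {#}"
    and strict: "\<And>X. X \<subseteq> V \<Longrightarrow> X \<noteq> {} \<Longrightarrow> X \<noteq> V \<Longrightarrow>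
      count_in A X < count_in B X + card (cut_arcs {} X)"
  shows "\<exists>v. v \<in># A \<and> v \<in># B"
proof -
  obtain a where a: "a \<in># A"
    using assms(4) by blast
  show ?thesis
  proof (cases "V = {a}")
    case True
    obtain b where "b \<in># B"
      using assms(3,4) by (metis multiset_nonemptyE size_empty size_eq_0_iff_empty)
    then show ?thesis
      using a assms(2) True by auto
  next
    case False
    then have "0 < count_in B {a}"
      using strict[of "{a}"] a assms(1) by (auto simp: cut_arcs_def)
    then show ?thesis
      using a count_in_pos_imp_mem by blast
  qed
qed

lemma cut_condition_inside:
  assumes "cut_condition V E A B" "X \<subseteq> V" "simple_graph V E"
  shows "cut_condition X (induced_edges E X) {#v \<in># A. v \<in> X#} (targets_inside E X B)"
  unfolding cut_condition_def
proof (intro allI impI)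
  fix Z assume Z: "Z \<subseteq> X"
  let ?C = "cut_arcs (induced_edges E X) Z" and ?L = "{f \<in> cut_arcs E X. fst f \<in> Z}"
  have fin: "finite (cut_arcs E X)" "finite ?C"
    using finite_cut_arcs[OF assms(3)] finite_cut_arcs[OF simple_graph_induced[OF assms(3,2)]] .
  have "cut_arcs E Z \<subseteq> ?C \<union> ?L"
    using Z by (auto simp: cut_arcs_def induced_edges_def)
  then have "card (cut_arcs E Z) \<le> card ?C + card ?L"
    using fin by (intro card_le_card_Un) auto
  moreover have "count_in A Z \<le> count_in B Z + card (cut_arcs E Z)"
    using assms(1,2) Z by (auto simp: cut_condition_def)
  ultimately show "count_in {#v \<in># A. v \<in> X#} Z \<le> count_in (targets_inside E X B) Z + card ?C"
    unfolding targets_inside_def count_in_union count_in_filter[OF Z] count_in_image_mset_set[OF fin(1)]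
    by linarith
qed

lemma cut_condition_outside:
  assumes "cut_condition V E A B" "X \<subseteq> V" "simple_graph V E"
    and tight: "count_in B X + card (cut_arcs E X) \<le> count_in A X"
  shows "cut_condition (V - X) (induced_edges E (V - X)) (sources_outside V E X A) {#v \<in># B. v \<in> V - X#}"
  unfolding cut_condition_def
proof (intro allI impI)
  fix Z assume Z: "Z \<subseteq> V - X"
  let ?C = "cut_arcs (induced_edges E (V - X)) Z"
  let ?P = "{f \<in> cut_arcs E X. snd f \<in> Z}" and ?N = "{f \<in> cut_arcs E X. snd f \<notin> Z}"
  have fin: "finite (cut_arcs E X)" "finite ?C"
    using finite_cut_arcs[OF assms(3)]
      finite_cut_arcs[OF simple_graph_induced[OF assms(3), of "V - X"]] by auto
  have "cut_arcs E (Z \<union> X) \<subseteq> ?C \<union> ?N"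
  proof
    fix f assume f: "f \<in> cut_arcs E (Z \<union> X)"
    moreover have "f \<in> V \<times> V"
      using f cut_arcs_subset[OF assms(3)] by blast
    ultimately show "f \<in> ?C \<union> ?N"
      using Z by (auto simp: cut_arcs_def induced_edges_def)
  qed
  then have "card (cut_arcs E (Z \<union> X)) \<le> card ?C + card ?N"
    using fin by (intro card_le_card_Un) auto
  moreover have "card ?P + card ?N = card (cut_arcs E X)"
  proof -
    have "card (?P \<union> ?N) = card ?P + card ?N"
      using fin(1) by (intro card_Un_disjoint) auto
    moreover have "?P \<union> ?N = cut_arcs E X"
      by blast
    ultimately show ?thesis
      by simp
  qed
  \<comment> \<open>the condition for Z is the one for Z \<union> X minus the tight one for X\<close>
  moreover have "count_in A (Z \<union> X) \<le> count_in B (Z \<union> X) + card (cut_arcs E (Z \<union> X))"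
    using assms(1,2) Z unfolding cut_condition_def by (meson Diff_subset le_sup_iff order_trans)
  moreover have "Z \<inter> X = {}"
    using Z by blast
  note count_in_Un_disjoint[OF this, of A] count_in_Un_disjoint[OF this, of B]
  ultimately show "count_in (sources_outside V E X A) Z \<le> count_in {#v \<in># B. v \<in> V - X#} Z + card ?C"
    unfolding sources_outside_def count_in_union count_in_filter[OF Z] count_in_image_mset_set[OF fin(1)]
    using tight by linarith
qed

lemma size_filter_mset_le_disj:
  "(\<And>x. x \<in># M \<Longrightarrow> P x \<Longrightarrow> Q x \<or> R x) \<Longrightarrow>
   size {#x \<in># M. P x#} \<le> size {#x \<in># M. Q x#} + size {#x \<in># M. R x#}"
  by (induction M) auto

lemma image_mset_eq_imp_pairing:
  "image_mset f M = image_mset g N \<Longrightarrow>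
   \<exists>R. image_mset fst R = M \<and> image_mset snd R = N \<and> (\<forall>r \<in># R. f (fst r) = g (snd r))"
proof (induction M arbitrary: N)
  case empty
  then show ?case by (intro exI[of _ "{#}"]) simp
next
  case (add x M)
  have "f x \<in># image_mset g N"
    using add.prems by (metis image_mset_add_mset union_single_eq_member)
  then obtain y where y: "y \<in># N" "g y = f x"
    by auto
  then obtain N' where N': "N = add_mset y N'"
    by (metis multi_member_split)
  then have "image_mset f M = image_mset g N'"
    using add.prems y by simp
  then obtain R where "image_mset fst R = M" "image_mset snd R = N'" "\<forall>r \<in># R. f (fst r) = g (snd r)"
    using add.IH by blast
  then show ?case
    using y N' by (intro exI[of _ "add_mset (x, y) R"]) auto
qed

lemma edge_load_image_mset: "edge_load (image_mset h R) e = size {#r \<in># R. e \<in> path_edges (h r)#}"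
  by (simp add: edge_load_def filter_mset_image_mset)

lemma edge_load_union [simp]: "edge_load (Ps + Qs) e = edge_load Ps e + edge_load Qs e"
  by (simp add: edge_load_def)

lemma edge_load_pos_imp_mem: "0 < edge_load Ps e \<Longrightarrow> \<exists>p \<in># Ps. e \<in> path_edges p"
  unfolding edge_load_def by (metis filter_mset_eq_mempty_iff gr_implies_not0 size_empty)

lemma image_mset_eq_imp_chain:
  assumes "image_mset f M = image_mset fst F" "image_mset g N = image_mset snd F"
  shows "\<exists>R. image_mset (\<lambda>r. fst (fst r)) R = M \<and> image_mset (\<lambda>r. snd (fst r)) R = F
    \<and> image_mset snd R = N
    \<and> (\<forall>r \<in># R. f (fst (fst r)) = fst (snd (fst r)) \<and> g (snd r) = snd (snd (fst r)))"
proof -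
  obtain R1 where R1: "image_mset fst R1 = M" "image_mset snd R1 = F"
      "\<forall>r \<in># R1. f (fst r) = fst (snd r)"
    using image_mset_eq_imp_pairing[OF assms(1)] by blast
  have "image_mset (snd \<circ> snd) R1 = image_mset g N"
    using assms(2) by (simp flip: R1(2) multiset.map_comp)
  then obtain R where R: "image_mset fst R = R1" "image_mset snd R = N"
      "\<forall>r \<in># R. (snd \<circ> snd) (fst r) = g (snd r)"
    using image_mset_eq_imp_pairing by blast
  have "image_mset (\<lambda>r. fst (fst r)) R = M" "image_mset (\<lambda>r. snd (fst r)) R = F"
    unfolding R1(1,2)[symmetric] R(1)[symmetric] by (simp_all add: multiset.map_comp comp_def)
  moreover have "fst r \<in># R1" if "r \<in># R" for r
    using that R(1) by force
  ultimately show ?thesis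
    using R(2,3) R1(3) by (intro exI[of _ R]) auto
qed

lemma concat_matched_walks:
  fixes Ps Qs :: "'a list multiset" and F :: "('a \<times> 'a) multiset"
  assumes "image_mset last Ps = image_mset fst F" "image_mset hd Qs = image_mset snd F"
    and "\<forall>p \<in># Ps. walk V E p" "\<forall>q \<in># Qs. walk V E q" "\<forall>f \<in># F. {fst f, snd f} \<in> E"
  shows "\<exists>G. image_mset hd G = image_mset hd Ps \<and> image_mset last G = image_mset last Qs
     \<and> (\<forall>g \<in># G. walk V E g)
     \<and> (\<forall>e. edge_load G e \<le> edge_load Ps e + edge_load Qs e + size {#f \<in># F. {fst f, snd f} = e#})"
proof -
  obtain R where Ps: "image_mset (\<lambda>r. fst (fst r)) R = Ps" and F: "image_mset (\<lambda>r. snd (fst r)) R = F"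
      and Qs: "image_mset snd R = Qs"
      and ends: "\<forall>r \<in># R. last (fst (fst r)) = fst (snd (fst r)) \<and> hd (snd r) = snd (snd (fst r))"
    using image_mset_eq_imp_chain[OF assms(1,2)] by blast
  let ?p = "\<lambda>r. fst (fst r)" and ?f = "\<lambda>r. snd (fst r)" and ?q = "\<lambda>r. snd r"
  have triple: "walk V E (?p r) \<and> walk V E (?q r) \<and> {last (?p r), hd (?q r)} \<in> E
      \<and> (last (?p r), hd (?q r)) = ?f r \<and> ?p r \<noteq> [] \<and> ?q r \<noteq> []" if "r \<in># R" for r
  proof -
    have f: "?f r \<in># F" and "walk V E (?p r)" "walk V E (?q r)"
      using that Qs F Ps assms(3,4) by force+
    moreover have eq: "(last (?p r), hd (?q r)) = ?f r"
      using that ends by (simp add: prod_eq_iff)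
    moreover have "{last (?p r), hd (?q r)} \<in> E"
      using assms(5) f eq by (metis fst_conv snd_conv)
    ultimately show ?thesis
      by (simp add: walk_def)
  qed
  define G where "G = image_mset (\<lambda>r. ?p r @ ?q r) R"
  have "image_mset hd G = image_mset hd Ps"
    unfolding G_def Ps[symmetric] multiset.map_comp by (rule image_mset_cong) (simp add: triple)
  moreover have "image_mset last G = image_mset last Qs"
    unfolding G_def Qs[symmetric] multiset.map_comp by (rule image_mset_cong) (simp add: triple)
  moreover have "\<forall>g \<in># G. walk V E g"
  proof
    fix g assume "g \<in># G"
    then obtain r where "r \<in># R" "g = ?p r @ ?q r"
      unfolding G_def by auto
    then show "walk V E g"
      using triple[of r] by (simp add: walk_append)
  qed
  moreover have "edge_load G e \<le> edge_load Ps e + edge_load Qs e + size {#f \<in># F. {fst f, snd f} = e#}" for e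
  proof -
    have "edge_load G e \<le> size {#r \<in># R. e \<in> path_edges (?p r)#}
        + size {#r \<in># R. e \<in> path_edges (?q r) \<or> {fst (?f r), snd (?f r)} = e#}"
      unfolding G_def edge_load_image_mset
    proof (rule size_filter_mset_le_disj)
      fix r assume "r \<in># R" "e \<in> path_edges (?p r @ ?q r)"
      then show "e \<in> path_edges (?p r) \<or> e \<in> path_edges (?q r) \<or> {fst (?f r), snd (?f r)} = e"
        using triple[of r] path_edges_append[of "?p r" "?q r"] by (auto simp: prod_eq_iff)
    qed
    also have "\<dots> \<le> size {#r \<in># R. e \<in> path_edges (?p r)#} + size {#r \<in># R. e \<in> path_edges (?q r)#}
        + size {#r \<in># R. {fst (?f r), snd (?f r)} = e#}"
      using size_filter_mset_le_disj[of R "\<lambda>r. e \<in> path_edges (?q r) \<or> {fst (?f r), snd (?f r)} = e"]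
      by auto
    also have "\<dots> = edge_load Ps e + edge_load Qs e + size {#f \<in># F. {fst f, snd f} = e#}"
      unfolding Ps[symmetric] Qs[symmetric] F[symmetric] edge_load_image_mset
      by (simp add: filter_mset_image_mset)
    finally show ?thesis .
  qed
  ultimately show ?thesis
    by blast
qed

lemma edge_load_pos_imp_edge:
  assumes "\<forall>p \<in># Ps. walk V E p" "0 < edge_load Ps e"
  shows "e \<in> E \<and> e \<noteq> {}"
proof -
  obtain p where "p \<in># Ps" "e \<in> path_edges p"
    using edge_load_pos_imp_mem[OF assms(2)] by blast
  then show ?thesis
    using assms(1) path_edges_nonempty by (auto simp: walk_iff_path_edges)
qed

lemma edge_load_across_cut:
  assumes "\<forall>p \<in># Ps1. walk X (induced_edges E X) p" "\<forall>p \<in># Ps2. walk (V - X) (induced_edges E (V - X)) p"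
    and "edge_load Ps1 e \<le> 1" "edge_load Ps2 e \<le> 1"
  shows "edge_load Ps1 e + edge_load Ps2 e + card {f \<in> cut_arcs E X. {fst f, snd f} = e} \<le> 1"
proof -
  let ?a = "card {f \<in> cut_arcs E X. {fst f, snd f} = e}"
  have "edge_load Ps1 e = 0 \<or> edge_load Ps2 e = 0"
    using edge_load_pos_imp_edge[OF assms(1), of e] edge_load_pos_imp_edge[OF assms(2), of e]
    by (auto simp: induced_edges_def)
  moreover have "?a = 0 \<or> (edge_load Ps1 e = 0 \<and> edge_load Ps2 e = 0)"
  proof (cases "?a = 0")
    case False
    then obtain u v where "(u, v) \<in> cut_arcs E X" "e = {u, v}"
      by (metis (mono_tags, lifting) Collect_empty_eq card.empty prod.collapse)
    then have "\<not> e \<subseteq> X" "\<not> e \<subseteq> V - X"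
      by (auto simp: cut_arcs_def)
    then show ?thesis
      using edge_load_pos_imp_edge[OF assms(1), of e] edge_load_pos_imp_edge[OF assms(2), of e]
      by (auto simp: induced_edges_def)
  qed simp
  ultimately show ?thesis
    using assms(3,4) card_cut_arcs_of_edge[of E X e] by linarith
qed

lemma edge_disjoint_linkage_glue:
  assumes sg: "simple_graph V E" and X: "X \<subseteq> V" and A: "set_mset A \<subseteq> V" and B: "set_mset B \<subseteq> V"
    and inside: "edge_disjoint_linkage X (induced_edges E X) {#v \<in># A. v \<in> X#} (targets_inside E X B) Ps1"
    and outside: "edge_disjoint_linkage (V - X) (induced_edges E (V - X))
      (sources_outside V E X A) {#v \<in># B. v \<in> V - X#} Ps2"
  shows "\<exists>Ps. edge_disjoint_linkage V E A B Ps"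
proof -
  let ?F = "mset_set (cut_arcs E X)"
  have fin: "finite (cut_arcs E X)"
    using finite_cut_arcs[OF sg] .
  have walks1: "\<forall>p \<in># Ps1. walk X (induced_edges E X) p"
    and walks2: "\<forall>p \<in># Ps2. walk (V - X) (induced_edges E (V - X)) p"
    using inside outside by (simp_all add: edge_disjoint_linkage_def)
  have "image_mset last Ps1 = {#v \<in># B. v \<in> X#} + image_mset fst ?F"
    using inside by (simp add: edge_disjoint_linkage_def targets_inside_def)
  then obtain Q1 M where Ps1: "Ps1 = Q1 + M" "{#v \<in># B. v \<in> X#} = image_mset last Q1"
      "image_mset fst ?F = image_mset last M"
    by (blast dest: image_mset_eq_plusD)
  have "image_mset hd Ps2 = {#v \<in># A. v \<in> V - X#} + image_mset snd ?F"
    using outside by (simp add: edge_disjoint_linkage_def sources_outside_def)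
  then obtain Q2 N where Ps2: "Ps2 = Q2 + N" "{#v \<in># A. v \<in> V - X#} = image_mset hd Q2"
      "image_mset snd ?F = image_mset hd N"
    by (blast dest: image_mset_eq_plusD)
  have "induced_edges E X \<subseteq> E" "induced_edges E (V - X) \<subseteq> E"
    by (auto simp: induced_edges_def)
  then have walks: "\<forall>p \<in># Ps1. walk V E p" "\<forall>p \<in># Ps2. walk V E p"
    using walks1 walks2 X by (auto intro: walk_mono)
  obtain G where G: "image_mset hd G = image_mset hd M" "image_mset last G = image_mset last N"
      "\<forall>g \<in># G. walk V E g"
      "\<forall>e. edge_load G e \<le> edge_load M e + edge_load N e + size {#f \<in># ?F. {fst f, snd f} = e#}"
    using concat_matched_walks[of M ?F N V E] Ps1(1,3) Ps2(1,3) walks fin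
    by (auto simp: cut_arcs_def)
  define Ps where "Ps = Q1 + Q2 + G"
  have "\<forall>p \<in># Ps. walk V E p"
    using walks G(3) Ps1(1) Ps2(1) by (auto simp: Ps_def)
  moreover have "image_mset hd Ps = A"
  proof -
    have "image_mset hd Ps = image_mset hd Ps1 + image_mset hd Q2"
      using G(1) Ps1(1) by (simp add: Ps_def)
    then show ?thesis
      using inside Ps2(2) filter_mset_split_carrier[OF A, of X]
      by (simp add: edge_disjoint_linkage_def)
  qed
  moreover have "image_mset last Ps = B"
  proof -
    have "image_mset last Ps = image_mset last Q1 + image_mset last Ps2"
      using G(2) Ps2(1) by (simp add: Ps_def)
    then show ?thesis
      using outside Ps1(2) filter_mset_split_carrier[OF B, of X]
      by (simp add: edge_disjoint_linkage_def)
  qed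
  moreover have "edge_load Ps e \<le> 1" for e
  proof -
    have "edge_load Ps e \<le> edge_load Ps1 e + edge_load Ps2 e + card {f \<in> cut_arcs E X. {fst f, snd f} = e}"
      using G(4)[rule_format, of e] Ps1(1) Ps2(1) fin by (simp add: Ps_def)
    then show ?thesis
      using edge_load_across_cut[OF walks1 walks2, of e] inside outside
      by (simp add: edge_disjoint_linkage_def)
  qed
  ultimately show ?thesis
    unfolding edge_disjoint_linkage_def by blast
qed

lemma edge_disjoint_linkage_add_trivial:
  "edge_disjoint_linkage V E A B Ps \<Longrightarrow> v \<in> V \<Longrightarrow>
   edge_disjoint_linkage V E (add_mset v A) (add_mset v B) (add_mset [v] Ps)"
  by (simp add: edge_disjoint_linkage_def walk_def edge_load_def)

lemma edge_disjoint_linkage_supergraph: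
  "edge_disjoint_linkage V E' A B Ps \<Longrightarrow> E' \<subseteq> E \<Longrightarrow> edge_disjoint_linkage V E A B Ps"
  unfolding edge_disjoint_linkage_def by (blast intro: walk_mono)

lemma inside_subproblem:
  assumes sg: "simple_graph V E" and cond: "cut_condition V E A B" and X: "X \<subseteq> V" "X \<noteq> V"
    and tight: "count_in B X + card (cut_arcs E X) \<le> count_in A X"
  shows "simple_graph X (induced_edges E X)"
    and "set_mset {#v \<in># A. v \<in> X#} \<subseteq> X" "set_mset (targets_inside E X B) \<subseteq> X"
    and "size {#v \<in># A. v \<in> X#} = size (targets_inside E X B)"
    and "cut_condition X (induced_edges E X) {#v \<in># A. v \<in> X#} (targets_inside E X B)"
    and "card X + card (induced_edges E X) + size {#v \<in># A. v \<in> X#} < card V + card E + size A"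
proof -
  have fin: "finite V" "finite E" "finite (cut_arcs E X)"
    using sg finite_edges[OF sg] finite_cut_arcs[OF sg] by (simp_all add: simple_graph_def)
  show "simple_graph X (induced_edges E X)"
    using simple_graph_induced[OF sg X(1)] .
  show "set_mset {#v \<in># A. v \<in> X#} \<subseteq> X" "set_mset (targets_inside E X B) \<subseteq> X"
    using fin(3) by (auto simp: targets_inside_def cut_arcs_def)
  have "count_in A X \<le> count_in B X + card (cut_arcs E X)"
    using cond X(1) by (simp add: cut_condition_def)
  then show "size {#v \<in># A. v \<in> X#} = size (targets_inside E X B)"
    using tight unfolding targets_inside_def size_union size_image_mset size_mset_set count_in_def[symmetric]
    by linarith
  show "cut_condition X (induced_edges E X) {#v \<in># A. v \<in> X#} (targets_inside E X B)"
    using cut_condition_inside[OF cond X(1) sg] .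
  have "card X < card V" "card (induced_edges E X) \<le> card E"
    using X fin by (auto intro!: psubset_card_mono card_mono simp: induced_edges_def)
  then show "card X + card (induced_edges E X) + size {#v \<in># A. v \<in> X#} < card V + card E + size A"
    using size_filter_mset_lesseq[of _ A] by (meson add_less_le_mono add_le_mono)
qed

lemma outside_subproblem:
  assumes sg: "simple_graph V E" and cond: "cut_condition V E A B" and X: "X \<subseteq> V" "X \<noteq> {}"
    and AB: "set_mset A \<subseteq> V" "set_mset B \<subseteq> V" "size A = size B"
    and tight: "count_in B X + card (cut_arcs E X) \<le> count_in A X"
  shows "simple_graph (V - X) (induced_edges E (V - X))"
    and "set_mset (sources_outside V E X A) \<subseteq> V - X" "set_mset {#v \<in># B. v \<in> V - X#} \<subseteq> V - X"
    and "size (sources_outside V E X A) = size {#v \<in># B. v \<in> V - X#}"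
    and "cut_condition (V - X) (induced_edges E (V - X)) (sources_outside V E X A) {#v \<in># B. v \<in> V - X#}"
    and "card (V - X) + card (induced_edges E (V - X)) + size (sources_outside V E X A)
           < card V + card E + size A"
proof -
  have fin: "finite V" "finite E" "finite (cut_arcs E X)"
    using sg finite_edges[OF sg] finite_cut_arcs[OF sg] by (simp_all add: simple_graph_def)
  show "simple_graph (V - X) (induced_edges E (V - X))"
    using simple_graph_induced[OF sg, of "V - X"] by blast
  show "set_mset (sources_outside V E X A) \<subseteq> V - X" "set_mset {#v \<in># B. v \<in> V - X#} \<subseteq> V - X"
    using fin(3) cut_arcs_subset[OF sg, of X] by (auto simp: sources_outside_def cut_arcs_def)
  have "count_in A X \<le> count_in B X + card (cut_arcs E X)"
    using cond X(1) by (simp add: cut_condition_def)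
  moreover have "count_in A X + count_in A (V - X) = size A" "count_in B X + count_in B (V - X) = size B"
    using count_in_compl AB(1,2) by blast+
  ultimately have sizes: "size (sources_outside V E X A) = size {#v \<in># B. v \<in> V - X#}"
      "size (sources_outside V E X A) \<le> size A"
    using tight AB(3)
    unfolding sources_outside_def size_union size_image_mset size_mset_set count_in_def[symmetric]
    by linarith+
  then show "size (sources_outside V E X A) = size {#v \<in># B. v \<in> V - X#}"
    by blast
  show "cut_condition (V - X) (induced_edges E (V - X)) (sources_outside V E X A) {#v \<in># B. v \<in> V - X#}"
    using cut_condition_outside[OF cond X(1) sg tight] .
  have "card (V - X) < card V" "card (induced_edges E (V - X)) \<le> card E"
    using X fin by (auto intro!: psubset_card_mono card_mono simp: induced_edges_def)
  then show "card (V - X) + card (induced_edges E (V - X)) + size (sources_outside V E X A)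
      < card V + card E + size A"
    using sizes(2) by linarith
qed

theorem edge_disjoint_menger:
  assumes "simple_graph V E" "set_mset A \<subseteq> V" "set_mset B \<subseteq> V" "size A = size B"
    and "cut_condition V E A B"
  shows "\<exists>Ps. edge_disjoint_linkage V E A B Ps"
  using assms
proof (induction "card V + card E + size A" arbitrary: V E A B rule: less_induct)
  case less
  note sg = less.prems(1) and AV = less.prems(2) and BV = less.prems(3) and sizes = less.prems(4)
    and cond = less.prems(5)
  have "finite E"
    using finite_edges[OF sg] .
  show ?case
  proof (cases "\<exists>v. v \<in># A \<and> v \<in># B")
    case True
    then obtain v A' B' where v: "A = add_mset v A'" "B = add_mset v B'"
      by (metis multi_member_split)
    then obtain Ps where "edge_disjoint_linkage V E A' B' Ps"
      using less.hyps[of V E A' B'] sg AV BV sizes cut_condition_remove_common[of V E v A' B'] cond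
      by auto
    then show ?thesis
      using edge_disjoint_linkage_add_trivial AV v by fastforce
  next
    case no_common: False
    show ?thesis
    proof (cases "\<exists>X. X \<subseteq> V \<and> X \<noteq> {} \<and> X \<noteq> V \<and> count_in B X + card (cut_arcs E X) \<le> count_in A X")
      case True
      then obtain X where X: "X \<subseteq> V" "X \<noteq> {}" "X \<noteq> V"
          and tight: "count_in B X + card (cut_arcs E X) \<le> count_in A X"
        by blast
      obtain Ps1 where Ps1: "edge_disjoint_linkage X (induced_edges E X) {#v \<in># A. v \<in> X#} (targets_inside E X B) Ps1"
        using less.hyps inside_subproblem[OF sg cond X(1,3) tight] by meson
      obtain Ps2 where "edge_disjoint_linkage (V - X) (induced_edges E (V - X))
          (sources_outside V E X A) {#v \<in># B. v \<in> V - X#} Ps2"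
        using less.hyps outside_subproblem[OF sg cond X(1,2) AV BV sizes tight] by meson
      then show ?thesis
        using edge_disjoint_linkage_glue[OF sg X(1) AV BV Ps1] by blast
    next
      case False
      then have strict: "count_in A X < count_in B X + card (cut_arcs E X)"
        if "X \<subseteq> V" "X \<noteq> {}" "X \<noteq> V" for X
        using that not_le by blast
      show ?thesis
      proof (cases "E = {}")
        case True
        then have "A = {#}"
          using common_vertex_if_no_edges[OF AV BV sizes _ strict[unfolded True]] no_common by blast
        moreover have "B = {#}"
          using sizes calculation by simp
        ultimately show ?thesis
          by (intro exI[of _ "{#}"]) (simp add: edge_disjoint_linkage_def edge_load_def)
      next
        case False
        then obtain e where e: "e \<in> E"
          by blast
        have "simple_graph V (E - {e})"
          using sg by (auto simp: simple_graph_def)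
        moreover have "card (E - {e}) < card E"
          using \<open>finite E\<close> e by (rule card_Diff1_less)
        ultimately obtain Ps where "edge_disjoint_linkage V (E - {e}) A B Ps"
          using less.hyps[of V "E - {e}" A B] AV BV sizes cut_condition_delete_edge[OF AV BV sizes strict sg]
          by auto
        then show ?thesis
          using edge_disjoint_linkage_supergraph by blast
      qed
    qed
  qed
qed

lemma edge_load_mset: "edge_load (mset ps) e = card {k. k < length ps \<and> e \<in> path_edges (ps ! k)}"
proof -
  have "edge_load (mset ps) e = length (filter (\<lambda>p. e \<in> path_edges p) ps)"
    by (simp add: edge_load_def flip: mset_filter)
  then show ?thesis
    by (simp add: length_filter_conv_card)
qed

lemma edge_load_le_1_imp_disjoint:
  assumes "\<forall>e. edge_load (mset ps) e \<le> 1" "i < length ps" "j < length ps" "i \<noteq> j"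
  shows "path_edges (ps ! i) \<inter> path_edges (ps ! j) = {}"
proof (rule ccontr)
  assume "path_edges (ps ! i) \<inter> path_edges (ps ! j) \<noteq> {}"
  then obtain e where "{i, j} \<subseteq> {k. k < length ps \<and> e \<in> path_edges (ps ! k)}"
    using assms(2,3) by auto
  then have "2 \<le> edge_load (mset ps) e"
    unfolding edge_load_mset using assms(4)
    by (metis (no_types, lifting) card_2_iff card_mono finite_nat_set_iff_bounded mem_Collect_eq)
  then show False
    using spec[OF assms(1), of e] by linarith
qed

lemma indexed_paths_of_linkage:
  assumes "edge_disjoint_linkage V E A B Ps"
  shows "\<exists>P. (\<forall>i < size A. path V E (P i))
    \<and> (\<forall>i < size A. \<forall>j < size A. i \<noteq> j \<longrightarrow> path_edges (P i) \<inter> path_edges (P j) = {})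
    \<and> image_mset (\<lambda>i. hd (P i)) (mset [0..<size A]) = A
    \<and> image_mset (\<lambda>i. last (P i)) (mset [0..<size A]) = B"
proof -
  obtain ps where ps: "mset ps = Ps"
    using ex_mset by blast
  have len: "length ps = size A"
    using assms size_image_mset[of hd Ps] by (simp add: edge_disjoint_linkage_def flip: ps)
  have "\<forall>i. i < length ps \<longrightarrow> (\<exists>p. path V E p \<and> path_edges p \<subseteq> path_edges (ps ! i)
      \<and> hd p = hd (ps ! i) \<and> last p = last (ps ! i))"
  proof (intro allI impI)
    fix i assume "i < length ps"
    then have "walk V E (ps ! i)"
      using assms nth_mem by (fastforce simp: edge_disjoint_linkage_def simp flip: ps)
    then show "\<exists>p. path V E p \<and> path_edges p \<subseteq> path_edges (ps ! i)
        \<and> hd p = hd (ps ! i) \<and> last p = last (ps ! i)"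
      by (rule walk_shortcut)
  qed
  then obtain P where P: "\<And>i. i < length ps \<Longrightarrow> path V E (P i) \<and> path_edges (P i) \<subseteq> path_edges (ps ! i)
      \<and> hd (P i) = hd (ps ! i) \<and> last (P i) = last (ps ! i)"
    by metis
  have disjoint: "path_edges (P i) \<inter> path_edges (P j) = {}"
    if "i < length ps" "j < length ps" "i \<noteq> j" for i j
    using edge_load_le_1_imp_disjoint[of ps i j] P[of i] P[of j] that assms
    by (auto simp: edge_disjoint_linkage_def ps)
  have ends: "image_mset (\<lambda>i. f (P i)) (mset [0..<size A]) = image_mset f Ps"
    if "f = hd \<or> f = last" for f
  proof -
    have "map (\<lambda>i. f (P i)) [0..<length ps] = map f ps"
      using P that by (auto intro: nth_equalityI)
    then show ?thesis
      using len by (metis mset_map ps)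
  qed
  show ?thesis
    using disjoint ends[of hd] ends[of last] assms P len
    by (intro exI[of _ P]) (auto simp: edge_disjoint_linkage_def)
qed

lemma walk_last_in_closed_set:
  assumes "walk V E' xs" "\<And>u v. {u, v} \<in> E' \<Longrightarrow> u \<in> X \<Longrightarrow> v \<in> X" "hd xs \<in> X"
  shows "last xs \<in> X"
  using assms
proof (induction xs rule: induct_list012)
  case (3 x y zs)
  then have "walk V E' (y # zs)" "y \<in> X"
    by (auto simp: walk_iff_path_edges)
  then show ?case
    using "3.IH"(2) "3.prems"(2) by simp
qed (auto simp: walk_def)

lemma disconnecting_cut_arcs:
  assumes "X \<subseteq> V" "X \<noteq> {}" "X \<noteq> V"
  shows "disconnecting V E ((\<lambda>(u, v). {u, v}) ` cut_arcs E X)"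
  unfolding disconnecting_def
proof
  let ?D = "(\<lambda>(u, v). {u, v}) ` cut_arcs E X"
  show "?D \<subseteq> E"
    by (auto simp: cut_arcs_def)
  have closed: "y \<in> X" if "{x, y} \<in> E - ?D" "x \<in> X" for x y
    using that by (auto simp: cut_arcs_def image_iff)
  obtain u v where uv: "u \<in> X" "v \<in> V" "v \<notin> X"
    using assms by blast
  show "\<not> connected_graph V (E - ?D)"
  proof
    assume "connected_graph V (E - ?D)"
    then have "reachable V (E - ?D) u v"
      using uv assms(1) unfolding connected_graph_def by blast
    then obtain xs where "walk V (E - ?D) xs" "hd xs = u" "last xs = v"
      unfolding reachable_def path_def by blast
    then show False
      using walk_last_in_closed_set[of V "E - ?D" xs X] closed uv by auto
  qed
qed

lemma edge_connectivity_le_card_cut_arcs: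
  assumes "X \<subseteq> V" "X \<noteq> {}" "X \<noteq> V"
  shows "edge_connectivity V E \<le> card (cut_arcs E X)"
proof -
  have "inj_on (\<lambda>(u, v). {u, v}) (cut_arcs E X)"
    by (auto intro!: inj_onI simp: cut_arcs_def doubleton_eq_iff)
  then have "card ((\<lambda>(u, v). {u, v}) ` cut_arcs E X) = card (cut_arcs E X)"
    by (rule card_image)
  then show ?thesis
    unfolding edge_connectivity_def using disconnecting_cut_arcs[OF assms]
    by (metis (mono_tags, lifting) Least_le)
qed

theorem mainTheorem13:
  fixes V :: "'a set" and E :: "'a set set" and k l q :: nat and col :: "'a set \<Rightarrow> nat"
    and D :: "'a set set" and C :: "'a set" and V1 V2 :: "'a multiset"
  assumes "cozy V E k col"
    and "edge_connectivity V E = 2 * l"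
    and "D \<subseteq> E" and "card D = 2 * l"
    and "disconnecting V E D"
    and "card (components V (E - D)) = 2"
    and "C \<in> components V (E - D)"
    and "set_mset V1 \<subseteq> C" and "set_mset V2 \<subseteq> C"
    and "size V1 = q" and "size V2 = q" and "q \<le> l"
  shows "\<exists>P :: nat \<Rightarrow> 'a list.
           (\<forall>i<q. path V E (P i)) \<and>
           (\<forall>i<q. \<forall>j<q. i \<noteq> j \<longrightarrow> path_edges (P i) \<inter> path_edges (P j) = {}) \<and>
           image_mset (\<lambda>i. hd (P i)) (mset [0..<q]) = V1 \<and>
           image_mset (\<lambda>i. last (P i)) (mset [0..<q]) = V2"
proof -
  have sg: "simple_graph V E"
    using assms(1) by (simp add: cozy_def)
  have "C \<subseteq> V"
    using assms(7) by (auto simp: components_def)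
  then have V1: "set_mset V1 \<subseteq> V" and V2: "set_mset V2 \<subseteq> V"
    using assms(8,9) by auto
  have "cut_condition V E V1 V2"
  proof (rule cut_conditionI[OF V1 V2])
    fix X assume "X \<subseteq> V" "X \<noteq> {}" "X \<noteq> V"
    then have "q \<le> card (cut_arcs E X)"
      using edge_connectivity_le_card_cut_arcs[of X V E] assms(2,12) by linarith
    then show "count_in V1 X \<le> count_in V2 X + card (cut_arcs E X)"
      using count_in_le_size[of V1 X] assms(10) by linarith
  qed (use assms(10,11) in simp)
  then obtain Ps where "edge_disjoint_linkage V E V1 V2 Ps"
    using edge_disjoint_menger[OF sg V1 V2] assms(10,11) by auto
  then show ?thesis
    using indexed_paths_of_linkage assms(10) by blast
qed

end
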